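(* Let $X\subseteq\{0,1\}^{\mathbb Z}$ be a measure-theoretically subordinate subshift. Then the base measure $\nu$ of $X$ is unique and ergodic. Moreover, $\nu$ is the unique measure in $\mathcal M(X)$ satisfying \[ \nu(1)=\sup_{\mu\in\mathcal M(X)}\mu(1), \] where for a measure $\mu$ on $\{0,1\}^{\mathbb Z}$ we write $\mu(1)=\mu(\{x: x_0=1\})$.
   Context: $\sigma$ denotes the left shift on $\{0,1\}^{\mathbb Z}$; a subshift is a closed $\sigma$-invariant subset. For a subshift (or product of subshifts) $Y$, $\mathcal M(Y)$ denotes the set of Borel probability measures on $Y$ invariant under the (product) shift. Let $M\colon\{0,1\}^{\mathbb Z}\times\{0,1\}^{\mathbb Z}\to\{0,1\}^{\mathbb Z}$ be coordinatewise multiplication, $M(x,y)_n=x_ny_n$, and $\pi_1$ the projection onto the first coordinate. A subshift $X\subseteq\{0,1\}^{\mathbb Z}$ is a measure-theoretically subordinate subshift if there exists $\nu\in\mathcal M(\{0,1\}^{\mathbb Z})$ such that $\mathcal M(X)=\{M_*(\lambda):\lambda\in\mathcal M(\{0,1\}^{\mathbb Z}\times\{0,1\}^{\mathbb Z},\sigma\times\sigma),\ (\pi_1)_*\lambda=\nu\}$; any such $\nu$ is called a base measure. *)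

theory Defs
  imports "HOL-Analysis.Analysis" "HOL-Probability.Probability"
begin

text \<open>Points of the full shift {0,1}^Z are functions int => bool (True = 1).\<close>

definition shift :: "(int \<Rightarrow> bool) \<Rightarrow> (int \<Rightarrow> bool)" where
  "shift x = (\<lambda>n. x (n + 1))"

definition full_shift_top :: "(int \<Rightarrow> bool) topology" where
  "full_shift_top = product_topology (\<lambda>_. discrete_topology UNIV) UNIV"

definition subshift :: "(int \<Rightarrow> bool) set \<Rightarrow> bool" where
  "subshift X \<longleftrightarrow> closedin full_shift_top X \<and> shift ` X = X"

text \<open>Borel sigma-algebra of {0,1}^Z (= product sigma-algebra).\<close>
definition Omega :: "(int \<Rightarrow> bool) measure" where
  "Omega = PiM UNIV (\<lambda>_. count_space UNIV)"

definition Omega2 :: "((int \<Rightarrow> bool) \<times> (int \<Rightarrow> bool)) measure" where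
  "Omega2 = Omega \<Otimes>\<^sub>M Omega"

definition inv_prob :: "(int \<Rightarrow> bool) measure \<Rightarrow> bool" where
  "inv_prob \<mu> \<longleftrightarrow> prob_space \<mu> \<and> sets \<mu> = sets Omega \<and> distr \<mu> Omega shift = \<mu>"

definition MX :: "(int \<Rightarrow> bool) set \<Rightarrow> (int \<Rightarrow> bool) measure set" where
  "MX X = {\<mu>. inv_prob \<mu> \<and> emeasure \<mu> X = 1}"

definition inv_prob2 :: "((int \<Rightarrow> bool) \<times> (int \<Rightarrow> bool)) measure \<Rightarrow> bool" where
  "inv_prob2 L \<longleftrightarrow> prob_space L \<and> sets L = sets Omega2 \<and>
     distr L Omega2 (map_prod shift shift) = L"

definition mult :: "(int \<Rightarrow> bool) \<times> (int \<Rightarrow> bool) \<Rightarrow> (int \<Rightarrow> bool)" where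
  "mult p = (\<lambda>n. fst p n \<and> snd p n)"

definition base_measure :: "(int \<Rightarrow> bool) set \<Rightarrow> (int \<Rightarrow> bool) measure \<Rightarrow> bool" where
  "base_measure X \<nu> \<longleftrightarrow> inv_prob \<nu> \<and>
     MX X = {distr L Omega mult | L. inv_prob2 L \<and> distr L Omega fst = \<nu>}"

definition meas_subordinate :: "(int \<Rightarrow> bool) set \<Rightarrow> bool" where
  "meas_subordinate X \<longleftrightarrow> subshift X \<and> (\<exists>\<nu>. base_measure X \<nu>)"

definition ergodic :: "(int \<Rightarrow> bool) measure \<Rightarrow> bool" where
  "ergodic \<mu> \<longleftrightarrow> (\<forall>A \<in> sets Omega. shift -` A = A \<longrightarrow> emeasure \<mu> A = 0 \<or> emeasure \<mu> A = 1)"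

definition cyl1 :: "(int \<Rightarrow> bool) set" where
  "cyl1 = {x. x 0}"

end

theory Submission
  imports Defs
begin

text \<open>
  For a shift-invariant joining \<open>L\<close> with first marginal \<open>\<nu>\<close> we have \<open>x\<^sub>0 y\<^sub>0 \<le> x\<^sub>0\<close>, so
  \<open>M\<^sub>*L(1) \<le> \<nu>(1)\<close>; if equality holds then \<open>x\<^sub>0 y\<^sub>0 = x\<^sub>0\<close> holds \<open>L\<close>-a.s., by invariance
  \<open>x\<^sub>n y\<^sub>n = x\<^sub>n\<close> a.s. for every \<open>n\<close>, and hence \<open>M\<^sub>*L = \<nu>\<close>. Joining \<open>\<nu>\<close> with the all-ones
  sequence shows \<open>\<nu> \<in> \<M>(X)\<close>, so any base measure is the unique maximiser of \<open>\<mu>(1)\<close> on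
  \<open>\<M>(X)\<close>, which also makes it unique. For ergodicity, if \<open>A\<close> is invariant with
  \<open>0 < \<nu>(A) < 1\<close>, then \<open>\<nu>\<close> is a convex combination of the conditional measures
  \<open>\<nu>(\<cdot> | A)\<close> and \<open>\<nu>(\<cdot> | A\<^sup>c)\<close>, which again lie in \<open>\<M>(X)\<close>; neither can exceed the maximal
  value of \<open>\<mu>(1)\<close>, so both attain it, whence \<open>\<nu>(\<cdot> | A) = \<nu>\<close>, contradicting \<open>\<nu>(A) < 1\<close>.
\<close>

lemma space_Omega [simp]: "space Omega = UNIV"
  by (simp add: Omega_def space_PiM)

lemma space_Omega2 [simp]: "space Omega2 = UNIV"
  by (simp add: Omega2_def space_pair_measure)

lemma measurable_coordinate [measurable]: "(\<lambda>x. x i) \<in> Omega \<rightarrow>\<^sub>M count_space UNIV"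
  unfolding Omega_def by (rule measurable_component_singleton) simp

lemma measurable_Omega_coordinatewise:
  assumes "\<And>i. (\<lambda>w. f w i) \<in> N \<rightarrow>\<^sub>M count_space UNIV"
  shows "f \<in> N \<rightarrow>\<^sub>M Omega"
proof -
  have "(\<lambda>w i. f w i) \<in> N \<rightarrow>\<^sub>M Omega"
    unfolding Omega_def by (rule measurable_PiM_single') (auto simp: assms)
  then show ?thesis by simp
qed

lemma measurable_shift_Omega [measurable]: "shift \<in> Omega \<rightarrow>\<^sub>M Omega"
  by (rule measurable_Omega_coordinatewise) (simp add: shift_def)

lemma measurable_mult [measurable]: "mult \<in> Omega2 \<rightarrow>\<^sub>M Omega"
  unfolding Omega2_def by (rule measurable_Omega_coordinatewise) (simp add: mult_def)

lemma measurable_fst_Omega2 [measurable]: "fst \<in> Omega2 \<rightarrow>\<^sub>M Omega"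
  unfolding Omega2_def by simp

lemma measurable_snd_Omega2 [measurable]: "snd \<in> Omega2 \<rightarrow>\<^sub>M Omega"
  unfolding Omega2_def by simp

lemma measurable_shift_shift [measurable]: "map_prod shift shift \<in> Omega2 \<rightarrow>\<^sub>M Omega2"
  unfolding Omega2_def by (simp add: map_prod_def split_beta')

lemma measurable_pair_ones [measurable]: "(\<lambda>x. (x, \<lambda>_. True)) \<in> Omega \<rightarrow>\<^sub>M Omega2"
  unfolding Omega2_def by simp

lemma cyl1_in_sets [measurable]: "cyl1 \<in> sets Omega"
proof -
  have "cyl1 = {x \<in> space Omega. x 0}" by (simp add: cyl1_def)
  also have "\<dots> \<in> sets Omega" by measurable
  finally show ?thesis .
qed

lemma inv_probD:
  assumes "inv_prob \<mu>"
  shows "prob_space \<mu>" "sets \<mu> = sets Omega" "space \<mu> = UNIV" "distr \<mu> Omega shift = \<mu>"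
  using assms sets_eq_imp_space_eq[of \<mu> Omega] by (auto simp: inv_prob_def)

lemma inv_prob2D:
  assumes "inv_prob2 L"
  shows "prob_space L" "sets L = sets Omega2" "space L = UNIV"
    "distr L Omega2 (map_prod shift shift) = L"
  using assms sets_eq_imp_space_eq[of L Omega2] by (auto simp: inv_prob2_def)

section \<open>Conditioning an invariant measure on an invariant set\<close>

lemma distr_uniform_measure_invariant:
  assumes T: "T \<in> M \<rightarrow>\<^sub>M M" and inv: "distr M M T = M"
    and A: "A \<in> sets M" and A_inv: "T -` A \<inter> space M = A"
  shows "distr (uniform_measure M A) M T = uniform_measure M A"
proof (rule measure_eqI)
  show "sets (distr (uniform_measure M A) M T) = sets (uniform_measure M A)" by simp
  fix S assume "S \<in> sets (distr (uniform_measure M A) M T)"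
  then have S: "S \<in> sets M" by simp
  have TS: "T -` S \<inter> space M \<in> sets M" using T S by measurable
  have "A \<inter> (T -` S \<inter> space M) = T -` (A \<inter> S) \<inter> space M" using A_inv by auto
  then have "emeasure M (A \<inter> (T -` S \<inter> space M)) = emeasure (distr M M T) (A \<inter> S)"
    using emeasure_distr[OF T, of "A \<inter> S"] A S by simp
  then show "emeasure (distr (uniform_measure M A) M T) S = emeasure (uniform_measure M A) S"
    using T S TS A inv by (simp add: emeasure_distr)
qed

lemma (in prob_space) prob_eq_mix_uniform_measure:
  assumes A: "A \<in> events" and C: "C \<in> events" and pos: "0 < prob A" "prob A < 1"
  shows "prob C = prob A * measure (uniform_measure M A) C
      + prob (space M - A) * measure (uniform_measure M (space M - A)) C"
proof -
  have compl: "space M - A \<in> events" and pos_compl: "0 < prob (space M - A)"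
    using A pos prob_compl[OF A] by auto
  have "C = (A \<inter> C) \<union> ((space M - A) \<inter> C)"
    using sets.sets_into_space[OF C] by blast
  then have "prob C = prob (A \<inter> C) + prob ((space M - A) \<inter> C)"
    using finite_measure_Union[of "A \<inter> C" "(space M - A) \<inter> C"] A C by auto
  then show ?thesis
    using A C compl pos pos_compl by (simp add: emeasure_eq_measure)
qed

lemma uniform_measure_in_MX:
  assumes \<nu>: "\<nu> \<in> MX X" and A: "A \<in> sets Omega" and A_inv: "shift -` A = A"
    and A_pos: "emeasure \<nu> A \<noteq> 0"
  shows "uniform_measure \<nu> A \<in> MX X"
proof -
  have ip: "inv_prob \<nu>" and X1: "emeasure \<nu> X = 1" using \<nu> by (auto simp: MX_def)
  note \<nu>D = inv_probD[OF ip]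
  interpret prob_space \<nu> by (rule \<nu>D(1))
  have shift_\<nu>: "shift \<in> \<nu> \<rightarrow>\<^sub>M \<nu>"
    using measurable_cong_sets[OF \<nu>D(2) \<nu>D(2)] by simp
  have X: "X \<in> sets \<nu>" using X1 emeasure_notin_sets by fastforce
  have "distr (uniform_measure \<nu> A) Omega shift = distr (uniform_measure \<nu> A) \<nu> shift"
    using \<nu>D(2) by (intro distr_cong) auto
  also have "\<dots> = uniform_measure \<nu> A"
    using distr_uniform_measure_invariant[OF shift_\<nu>, of A] \<nu>D A A_inv
    by (simp add: distr_cong[OF refl \<nu>D(2)])
  finally have inv: "distr (uniform_measure \<nu> A) Omega shift = uniform_measure \<nu> A" .
  have "AE x in \<nu>. x \<in> X" using AE_in_set_eq_1[OF X] X1 by (simp add: emeasure_eq_measure)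
  then have "emeasure \<nu> (A \<inter> X) = emeasure \<nu> A"
    using A X \<nu>D(2) by (intro emeasure_eq_AE) auto
  then have "emeasure (uniform_measure \<nu> A) X = 1"
    using A X A_pos \<nu>D(2) by (simp add: emeasure_eq_measure)
  moreover have "prob_space (uniform_measure \<nu> A)"
    using A_pos by (intro prob_space_uniform_measure) auto
  ultimately show ?thesis
    using inv \<nu>D(2) by (simp add: MX_def inv_prob_def)
qed

section \<open>Comparing the marginals of a joining\<close>

lemma joining_with_ones:
  assumes "inv_prob \<nu>"
  shows "\<exists>L. inv_prob2 L \<and> distr L Omega fst = \<nu> \<and> distr L Omega mult = \<nu>"
proof -
  note \<nu>D = inv_probD[OF assms]
  define g where "g = (\<lambda>x::int \<Rightarrow> bool. (x, \<lambda>_::int. True))"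
  have g: "g \<in> \<nu> \<rightarrow>\<^sub>M Omega2" and shift: "shift \<in> \<nu> \<rightarrow>\<^sub>M Omega"
    unfolding g_def by (simp_all add: measurable_cong_sets[OF \<nu>D(2) refl])
  define L where "L = distr \<nu> Omega2 g"
  have "distr L Omega2 (map_prod shift shift) = distr \<nu> Omega2 (g \<circ> shift)"
    unfolding L_def using g by (subst distr_distr) (auto simp: g_def shift_def comp_def)
  also have "\<dots> = distr (distr \<nu> Omega shift) Omega2 g"
    using g shift \<nu>D(2) by (subst distr_distr) (simp_all add: measurable_cong_sets[OF \<nu>D(2) refl])
  finally have "distr L Omega2 (map_prod shift shift) = L"
    using \<nu>D(4) by (simp add: L_def)
  moreover have "distr L Omega f = \<nu>" if "f \<in> Omega2 \<rightarrow>\<^sub>M Omega" "f \<circ> g = (\<lambda>x. x)" for f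
    using that g distr_id2[OF \<nu>D(2)[symmetric]] by (simp add: L_def distr_distr)
  moreover have "prob_space L"
    unfolding L_def using prob_space.prob_space_distr[OF \<nu>D(1) g] .
  ultimately show ?thesis
    unfolding inv_prob2_def L_def by (fastforce simp: g_def mult_def fun_eq_iff)
qed

lemma measure_mult_cyl1_le:
  assumes "finite_measure L" "sets L = sets Omega2"
  shows "measure (distr L Omega mult) cyl1 \<le> measure (distr L Omega fst) cyl1"
proof -
  have "mult -` cyl1 \<subseteq> fst -` cyl1" by (auto simp: mult_def cyl1_def)
  moreover have "fst -` cyl1 \<in> sets L"
    using measurable_sets[OF measurable_fst_Omega2 cyl1_in_sets] assms(2) by simp
  ultimately show ?thesis
    using assms sets_eq_imp_space_eq[OF assms(2)]
    by (simp add: measure_distr measurable_cong_sets[OF assms(2) refl] finite_measure.finite_measure_mono)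
qed

definition mult_defect :: "int \<Rightarrow> ((int \<Rightarrow> bool) \<times> (int \<Rightarrow> bool)) set" where
  "mult_defect n = {p. fst p n \<and> \<not> snd p n}"

lemma mult_defect_in_sets [measurable]: "mult_defect n \<in> sets Omega2"
proof -
  have "mult_defect n = {p \<in> space Omega2. fst p n \<and> \<not> snd p n}" by (simp add: mult_defect_def)
  also have "\<dots> \<in> sets Omega2" by measurable
  finally show ?thesis .
qed

lemma measure_mult_defect_const:
  assumes L: "inv_prob2 L"
  shows "measure L (mult_defect n) = measure L (mult_defect 0)"
proof -
  note LD = inv_prob2D[OF L]
  have step: "measure L (mult_defect (i + 1)) = measure L (mult_defect i)" for i
  proof -
    have "map_prod shift shift -` mult_defect i = mult_defect (i + 1)"
      by (auto simp: mult_defect_def shift_def)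
    then show ?thesis
      using measure_distr[of "map_prod shift shift" L Omega2 "mult_defect i"] LD
      by (simp add: measurable_cong_sets[OF LD(2) refl])
  qed
  show ?thesis
  proof (induction n rule: int_induct[where k=0])
    case (step1 i)
    then show ?case using step[of i] by simp
  next
    case (step2 i)
    then show ?case using step[of "i - 1"] by simp
  qed simp
qed

lemma distr_mult_eq_fst_if_measure_cyl1_eq:
  assumes L: "inv_prob2 L"
    and eq: "measure (distr L Omega mult) cyl1 = measure (distr L Omega fst) cyl1"
  shows "distr L Omega mult = distr L Omega fst"
proof -
  note LD = inv_prob2D[OF L]
  interpret prob_space L by (rule LD(1))
  have mult: "mult \<in> L \<rightarrow>\<^sub>M Omega" and fst: "fst \<in> L \<rightarrow>\<^sub>M Omega"
    by (simp_all add: measurable_cong_sets[OF LD(2) refl])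
  have sets: "mult -` cyl1 \<in> events" "fst -` cyl1 \<in> events"
    using measurable_sets[OF mult cyl1_in_sets] measurable_sets[OF fst cyl1_in_sets] LD(3) by simp_all
  have "prob (mult -` cyl1) = prob (fst -` cyl1)"
    using eq measure_distr[OF mult cyl1_in_sets] measure_distr[OF fst cyl1_in_sets] LD(3) by simp
  moreover have "mult -` cyl1 \<subseteq> fst -` cyl1" "mult_defect 0 = fst -` cyl1 - mult -` cyl1"
    by (auto simp: mult_defect_def mult_def cyl1_def)
  ultimately have "prob (mult_defect 0) = 0"
    using finite_measure_Diff[OF sets(2,1)] by simp
  then have "\<forall>n. AE p in L. p \<notin> mult_defect n"
    using measure_mult_defect_const[OF L] LD(2)
    by (intro allI AE_not_in) (simp add: emeasure_eq_measure null_sets_def)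
  then have "AE p in L. mult p = fst p"
    unfolding AE_all_countable[symmetric]
    by eventually_elim (auto simp: mult_defect_def mult_def fun_eq_iff)
  then show ?thesis by (intro distr_cong_AE[OF refl refl _ mult fst])
qed

lemma base_measure_MX_eq:
  "base_measure X \<nu> \<Longrightarrow> MX X = {distr L Omega mult | L. inv_prob2 L \<and> distr L Omega fst = \<nu>}"
  by (simp add: base_measure_def)

lemma base_measure_in_MX:
  assumes "base_measure X \<nu>"
  shows "\<nu> \<in> MX X"
proof -
  obtain L where "inv_prob2 L" "distr L Omega fst = \<nu>" "distr L Omega mult = \<nu>"
    using joining_with_ones assms by (auto simp: base_measure_def)
  then show ?thesis unfolding base_measure_MX_eq[OF assms] by (auto intro!: exI[of _ L])
qed

lemma base_measure_maximal:
  assumes "base_measure X \<nu>" "\<mu> \<in> MX X"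
  shows "measure \<mu> cyl1 \<le> measure \<nu> cyl1"
  using assms measure_mult_cyl1_le[OF _ inv_prob2D(2)] prob_space.finite_measure[OF inv_prob2D(1)]
  by (fastforce simp: base_measure_MX_eq[OF assms(1)])

lemma base_measure_unique_maximiser:
  assumes "base_measure X \<nu>" "\<mu> \<in> MX X" "measure \<mu> cyl1 = measure \<nu> cyl1"
  shows "\<mu> = \<nu>"
  using assms distr_mult_eq_fst_if_measure_cyl1_eq
  by (fastforce simp: base_measure_MX_eq[OF assms(1)])

lemma base_measure_eq_SUP:
  assumes "base_measure X \<nu>"
  shows "measure \<nu> cyl1 = (SUP \<mu>\<in>MX X. measure \<mu> cyl1)"
  by (rule cSup_eq_maximum[symmetric])
    (use base_measure_in_MX[OF assms] base_measure_maximal[OF assms] in auto)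

lemma base_measure_ergodic:
  assumes b: "base_measure X \<nu>"
  shows "ergodic \<nu>"
  unfolding ergodic_def
proof (intro ballI impI)
  fix A assume A: "A \<in> sets Omega" and A_inv: "shift -` A = A"
  have \<nu>: "\<nu> \<in> MX X" by (rule base_measure_in_MX[OF b])
  have \<nu>D: "prob_space \<nu>" "sets \<nu> = sets Omega" "space \<nu> = UNIV"
    using \<nu> inv_probD by (auto simp: MX_def)
  interpret prob_space \<nu> by (rule \<nu>D(1))
  show "emeasure \<nu> A = 0 \<or> emeasure \<nu> A = 1"
  proof (rule ccontr)
    assume "\<not> ?thesis"
    then have pos: "0 < prob A" "prob A < 1"
      using prob_le_1[of A] by (auto simp: emeasure_eq_measure order_less_le)
    define B where "B = UNIV - A"
    have B: "B \<in> sets Omega" "shift -` B = B" "emeasure \<nu> B \<noteq> 0"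
      using A A_inv pos prob_compl[of A] \<nu>D sets.compl_sets[of A Omega]
      by (auto simp: B_def emeasure_eq_measure)
    let ?u = "measure (uniform_measure \<nu> A) cyl1" and ?w = "measure (uniform_measure \<nu> B) cyl1"
    have UA: "uniform_measure \<nu> A \<in> MX X"
      using uniform_measure_in_MX[OF \<nu> A A_inv] pos by (simp add: emeasure_eq_measure)
    have "?u \<le> prob cyl1" "?w \<le> prob cyl1"
      using base_measure_maximal[OF b] UA uniform_measure_in_MX[OF \<nu> B] by auto
    then have "prob A * ?u \<le> prob A * prob cyl1" "prob B * ?w \<le> prob B * prob cyl1"
      by (simp_all add: mult_left_mono)
    moreover have "prob cyl1 = prob A * ?u + prob B * ?w" "prob B = 1 - prob A"
      using prob_eq_mix_uniform_measure[of A cyl1] prob_compl[of A] A pos \<nu>D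
      by (simp_all add: B_def)
    moreover have "prob A * prob cyl1 + prob B * prob cyl1 = prob cyl1"
      by (subst \<open>prob B = 1 - prob A\<close>) (simp add: left_diff_distrib)
    ultimately have "prob A * ?u = prob A * prob cyl1" by linarith
    then have "?u = prob cyl1" using pos by simp
    then have "uniform_measure \<nu> A = \<nu>"
      by (rule base_measure_unique_maximiser[OF b UA])
    moreover have "emeasure (uniform_measure \<nu> A) A = 1"
      using pos A \<nu>D by (intro emeasure_uniform_measure_1) (auto simp: emeasure_eq_measure)
    ultimately show False using pos by (simp add: emeasure_eq_measure)
  qed
qed

theorem proposition3p1:
  assumes "meas_subordinate X"
  shows "(\<exists>!\<nu>. base_measure X \<nu>) \<and>
    (\<forall>\<nu>. base_measure X \<nu> \<longrightarrow>
       ergodic \<nu> \<and> \<nu> \<in> MX X \<and>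
       measure \<nu> cyl1 = (SUP \<mu>\<in>MX X. measure \<mu> cyl1) \<and>
       (\<forall>\<mu>\<in>MX X. measure \<mu> cyl1 = (SUP \<mu>'\<in>MX X. measure \<mu>' cyl1) \<longrightarrow> \<mu> = \<nu>))"
proof -
  obtain \<nu> where b: "base_measure X \<nu>"
    using assms by (auto simp: meas_subordinate_def)
  have "\<nu>' = \<nu>" if b': "base_measure X \<nu>'" for \<nu>'
    using base_measure_maximal[OF b base_measure_in_MX[OF b']]
      base_measure_maximal[OF b' base_measure_in_MX[OF b]]
    by (intro base_measure_unique_maximiser[OF b base_measure_in_MX[OF b']]) simp
  with b have "\<exists>!\<nu>. base_measure X \<nu>" by blast
  moreover have "ergodic \<nu>' \<and> \<nu>' \<in> MX X \<and> measure \<nu>' cyl1 = (SUP \<mu>\<in>MX X. measure \<mu> cyl1) \<and>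
      (\<forall>\<mu>\<in>MX X. measure \<mu> cyl1 = (SUP \<mu>'\<in>MX X. measure \<mu>' cyl1) \<longrightarrow> \<mu> = \<nu>')"
    if b': "base_measure X \<nu>'" for \<nu>'
    unfolding base_measure_eq_SUP[OF b', symmetric]
    using base_measure_ergodic[OF b'] base_measure_in_MX[OF b'] base_measure_unique_maximiser[OF b']
    by blast
  ultimately show ?thesis by blast
qed

end
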